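(* Let $\mathbf{X}\sim\mathcal{MMN}_p(\mathbf{0},\overline{\mathbf{\Omega}},\boldsymbol{\delta};H)$, i.e. $\mathbf{X}=\boldsymbol{\delta}U+\mathbf{Z}$ with $\mathbf{Z}\sim\mathcal{N}_p(\mathbf{0},\mathbf{\Sigma}_{\mathbf{X}})$ independent of $U\sim H$, where $\mathbf{\Sigma}_{\mathbf{X}}=\overline{\mathbf{\Omega}}-\boldsymbol{\delta}\boldsymbol{\delta}^\top$, and assume the moment generating function $M_U$ of $U$ is finite in a neighbourhood of $0$. Then, with $\mathrm{E}(U^k)=M_U^{(k)}(0)$, $$M_1(\mathbf{X})=\mathrm{E}[U]\boldsymbol{\delta},\qquad M_2(\mathbf{X})=\mathbf{\Sigma}_{\mathbf{X}}+\mathrm{E}[U^2](\boldsymbol{\delta}\otimes\boldsymbol{\delta}^\top),$$ $$M_3(\mathbf{X})=\mathrm{E}[U]\{\boldsymbol{\delta}\otimes\mathbf{\Sigma}_{\mathbf{X}}+\mathrm{vec}(\mathbf{\Sigma}_{\mathbf{X}})\boldsymbol{\delta}^\top+(\mathbf{I}_p\otimes\boldsymbol{\delta})\mathbf{\Sigma}_{\mathbf{X}}\}+\mathrm{E}[U^3](\mathbf{I}_p\otimes\boldsymbol{\delta})(\boldsymbol{\delta}\otimes\boldsymbol{\delta}^\top),$$ $$\begin{aligned}M_4(\mathbf{X})={}&(\mathbf{I}_{p^2}+\mathbf{U}_{p,p})(\mathbf{\Sigma}_{\mathbf{X}}\otimes\mathbf{\Sigma}_{\mathbf{X}})+\mathr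m{vec}(\mathbf{\Sigma}_{\mathbf{X}})(\mathrm{vec}(\mathbf{\Sigma}_{\mathbf{X}}))^\top\\&+\mathrm{E}[U^2]\big[\boldsymbol{\delta}\otimes\boldsymbol{\delta}^\top\otimes\mathbf{\Sigma}_{\mathbf{X}}+\boldsymbol{\delta}\otimes\mathbf{\Sigma}_{\mathbf{X}}\otimes\boldsymbol{\delta}^\top+\mathbf{\Sigma}_{\mathbf{X}}\otimes\boldsymbol{\delta}\otimes\boldsymbol{\delta}^\top+\boldsymbol{\delta}^\top\otimes\mathbf{\Sigma}_{\mathbf{X}}\otimes\boldsymbol{\delta}\\&\qquad+\boldsymbol{\delta}^\top\otimes\mathrm{vec}(\mathbf{\Sigma}_{\mathbf{X}})\otimes\boldsymbol{\delta}^\top+(\boldsymbol{\delta}\otimes\boldsymbol{\delta})(\mathrm{vec}(\mathbf{\Sigma}_{\mathbf{X}}))^\top\big]+\mathrm{E}[U^4]\,\boldsymbol{\delta}\boldsymbol{\delta}^\top\otimes\boldsymbol{\delta}\boldsymbol{\delta}^\top.\end{aligned}$$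
   Context: $\overline{\mathbf{\Omega}}$ is a $p\times p$ correlation matrix, $\boldsymbol{\delta}\in\mathbb{R}^p$ with $\overline{\mathbf{\Omega}}-\boldsymbol{\delta}\boldsymbol{\delta}^\top$ positive definite, $U$ a real random variable with CDF $H$. For a random vector $\mathbf{X}$ the moments are defined by $M_1(\mathbf{X})=\mathrm{E}(\mathbf{X})$, $M_2(\mathbf{X})=\mathrm{E}(\mathbf{X}\otimes\mathbf{X}^\top)=\mathrm{E}(\mathbf{X}\mathbf{X}^\top)$, $M_3(\mathbf{X})=\mathrm{E}(\mathbf{X}\otimes\mathbf{X}^\top\otimes\mathbf{X})$ (a $p^2\times p$ matrix), $M_4(\mathbf{X})=\mathrm{E}(\mathbf{X}\mathbf{X}^\top\otimes\mathbf{X}\mathbf{X}^\top)$ (a $p^2\times p^2$ matrix). $\otimes$ is the Kronecker product, $\mathrm{vec}(\mathbf{A})$ stacks the columns of $\mathbf{A}$ into one column vector, and $\mathbf{U}_{p,p}$ is the $p^2\times p^2$ commutation matrix (satisfying $\mathbf{U}_{p,p}\mathrm{vec}(\mathbf{A})=\mathrm{vec}(\mathbf{A}^\top)$ for $p\times p$ matrices $\mathbf{A}$). $M_U^{(k)}$ denotes the $k$-th derivative of $M_U(t)=\mathrm{E}[e^{tU}]$. *)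

theory Defs
  imports "HOL-Probability.Probability" "Jordan_Normal_Form.Matrix"
begin

definition kron :: "real mat \<Rightarrow> real mat \<Rightarrow> real mat" where
  "kron A B = mat (dim_row A * dim_row B) (dim_col A * dim_col B)
     (\<lambda>(i,j). A $$ (i div dim_row B, j div dim_col B) * B $$ (i mod dim_row B, j mod dim_col B))"

(* vec(A): stack the columns of A into one column (an (m*n) x 1 matrix) *)
definition vecm :: "real mat \<Rightarrow> real mat" where
  "vecm A = mat (dim_row A * dim_col A) 1 (\<lambda>(i,_). A $$ (i mod dim_row A, i div dim_row A))"

(* commutation matrix U_{m,n}: the mn x mn matrix with U_{m,n} vec(A) = vec(A^T) for A m x n *)
definition commutation_mat :: "nat \<Rightarrow> nat \<Rightarrow> real mat" where
  "commutation_mat m n = mat (m * n) (m * n)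
     (\<lambda>(r,c). if c = r div n + (r mod n) * m then 1 else 0)"

definition correlation_mat :: "nat \<Rightarrow> real mat \<Rightarrow> bool" where
  "correlation_mat p A \<longleftrightarrow> A \<in> carrier_mat p p \<and> transpose_mat A = A \<and>
     (\<forall>i<p. A $$ (i,i) = 1) \<and>
     (\<forall>v \<in> carrier_vec p. 0 \<le> scalar_prod v (A *\<^sub>v v))"

definition pos_def_mat :: "nat \<Rightarrow> real mat \<Rightarrow> bool" where
  "pos_def_mat p A \<longleftrightarrow> A \<in> carrier_mat p p \<and> transpose_mat A = A \<and>
     (\<forall>v \<in> carrier_vec p. v \<noteq> 0\<^sub>v p \<longrightarrow> 0 < scalar_prod v (A *\<^sub>v v))"

definition centred_mvnormal :: "'a measure \<Rightarrow> nat \<Rightarrow> (nat \<Rightarrow> 'a \<Rightarrow> real) \<Rightarrow> real mat \<Rightarrow> bool" where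
  "centred_mvnormal M p Z S \<longleftrightarrow>
     (\<forall>i<p. Z i \<in> borel_measurable M) \<and>
     (\<forall>a :: nat \<Rightarrow> real.
        (CLINT \<omega>|M. cis (\<Sum>i<p. a i * Z i \<omega>)) =
        complex_of_real (exp (- (\<Sum>i<p. \<Sum>j<p. a i * S $$ (i,j) * a j) / 2)))"

definition mat_expect :: "'a measure \<Rightarrow> nat \<Rightarrow> nat \<Rightarrow> ('a \<Rightarrow> real mat) \<Rightarrow> real mat" where
  "mat_expect M r c F = mat r c (\<lambda>ij. integral\<^sup>L M (\<lambda>\<omega>. F \<omega> $$ ij))"

end

(*
  The k-th derivative of the moment generating function is E[U^k e^(tU)]: the difference
  quotients are dominated because |U|^k e^(tU) e^(r|U|) is integrable whenever |t| + r lies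
  below the radius on which the moment generating function is finite.

  For a fixed coefficient vector a, the linear form a^T Z has the same characteristic function
  as sqrt(a^T Sigma a) times a standard normal variable, and it is independent of U.  The binomial
  theorem therefore gives E[(c U + a^T Z)^n] for n <= 4 in terms of E[U^k] and a^T Sigma a.
  Every linear combination of the coordinates of X = delta U + Z has this form, so polarization
  turns these one-dimensional moments into the mixed moments E[X_i X_j X_k X_l]; the four matrix
  identities are then checked entrywise.
*)
theory Submission
  imports Defs
begin

section \<open>Derivatives of the moment generating function\<close>

lemma power_div_fact_le_exp:
  fixes x :: real
  assumes "0 \<le> x"
  shows "x ^ m / fact m \<le> exp x"
proof -
  obtain t where t: "exp x = (\<Sum>k<Suc m. x ^ k / fact k) + exp t / fact (Suc m) * x ^ Suc m"
    using Maclaurin_exp_le[of x "Suc m"] by blast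
  have "x ^ m / fact m \<le> (\<Sum>k<Suc m. x ^ k / fact k)"
    using assms by (intro member_le_sum) auto
  also have "\<dots> \<le> exp x"
    unfolding t using assms by simp
  finally show ?thesis .
qed

lemma abs_power_le_exp_abs:
  fixes u d :: real
  assumes "0 < d"
  shows "\<bar>u\<bar> ^ m \<le> fact m / d ^ m * exp (d * \<bar>u\<bar>)"
proof -
  have "(d * \<bar>u\<bar>) ^ m / fact m \<le> exp (d * \<bar>u\<bar>)"
    using assms by (intro power_div_fact_le_exp) auto
  then show ?thesis
    using assms by (simp add: field_simps power_mult_distrib)
qed

lemma abs_exp_minus_one_minus_le:
  fixes x :: real
  shows "\<bar>exp x - 1 - x\<bar> \<le> x\<^sup>2 * exp \<bar>x\<bar>"
proof -
  obtain t where t: "\<bar>t\<bar> \<le> \<bar>x\<bar>" "exp x = (\<Sum>k<2. x ^ k / fact k) + exp t / fact 2 * x\<^sup>2"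
    using Maclaurin_exp_le[of x 2] by blast
  then have "\<bar>exp x - 1 - x\<bar> = exp t / 2 * x\<^sup>2"
    by (simp add: numeral_2_eq_2)
  also have "\<dots> \<le> exp \<bar>x\<bar> * x\<^sup>2"
  proof (rule mult_right_mono)
    have "exp t \<le> exp \<bar>x\<bar>"
      using t(1) by simp
    then show "exp t / 2 \<le> exp \<bar>x\<bar>"
      using exp_gt_zero[of t] by linarith
  qed simp
  finally show ?thesis
    by (simp add: mult.commute)
qed

lemma abs_power_exp_remainder_le:
  fixes u t h r :: real
  assumes "\<bar>h\<bar> \<le> r"
  shows "\<bar>u ^ n * exp ((t + h) * u) - u ^ n * exp (t * u) - h * (u ^ Suc n * exp (t * u))\<bar>
    \<le> (\<bar>u\<bar> ^ (n + 2) * exp (t * u) * exp (r * \<bar>u\<bar>)) * h\<^sup>2"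
proof -
  have "u ^ n * exp ((t + h) * u) - u ^ n * exp (t * u) - h * (u ^ Suc n * exp (t * u))
      = u ^ n * exp (t * u) * (exp (h * u) - 1 - h * u)"
    by (simp add: distrib_right exp_add algebra_simps)
  then have "\<bar>u ^ n * exp ((t + h) * u) - u ^ n * exp (t * u) - h * (u ^ Suc n * exp (t * u))\<bar>
      = \<bar>u\<bar> ^ n * exp (t * u) * \<bar>exp (h * u) - 1 - h * u\<bar>"
    by (simp add: abs_mult power_abs)
  also have "\<dots> \<le> \<bar>u\<bar> ^ n * exp (t * u) * ((h * u)\<^sup>2 * exp (r * \<bar>u\<bar>))"
  proof (rule mult_left_mono)
    have "\<bar>h * u\<bar> \<le> r * \<bar>u\<bar>"
      using assms by (simp add: abs_mult mult_right_mono)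
    then have "(h * u)\<^sup>2 * exp \<bar>h * u\<bar> \<le> (h * u)\<^sup>2 * exp (r * \<bar>u\<bar>)"
      by (intro mult_left_mono) auto
    then show "\<bar>exp (h * u) - 1 - h * u\<bar> \<le> (h * u)\<^sup>2 * exp (r * \<bar>u\<bar>)"
      using abs_exp_minus_one_minus_le[of "h * u"] by linarith
  qed simp
  also have "\<dots> = (\<bar>u\<bar> ^ (n + 2) * exp (t * u) * exp (r * \<bar>u\<bar>)) * h\<^sup>2"
  proof -
    have "\<bar>u\<bar> ^ (n + 2) = \<bar>u\<bar> ^ n * u\<^sup>2"
      by (metis power_add power2_abs)
    then show ?thesis
      by (simp only: power_mult_distrib) (simp only: mult_ac)
  qed
  finally show ?thesis .
qed

lemma has_real_derivative_quadratic_remainder: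
  fixes f :: "real \<Rightarrow> real"
  assumes "0 < r" and remainder: "\<And>h. \<bar>h\<bar> < r \<Longrightarrow> \<bar>f (t + h) - f t - h * D\<bar> \<le> C * h\<^sup>2"
  shows "(f has_real_derivative D) (at t)"
proof -
  have "((\<lambda>h. (f (t + h) - f t) / h - D) \<longlongrightarrow> 0) (at 0)"
  proof (rule Lim_null_comparison)
    show "\<forall>\<^sub>F h in at 0. norm ((f (t + h) - f t) / h - D) \<le> C * \<bar>h\<bar>"
      unfolding eventually_at
    proof (intro exI[of _ r] conjI allI ballI impI)
      fix h :: real
      assume "h \<noteq> 0 \<and> dist h 0 < r"
      then have h: "h \<noteq> 0" "\<bar>h\<bar> < r" by auto
      have "norm ((f (t + h) - f t) / h - D) = \<bar>f (t + h) - f t - h * D\<bar> / \<bar>h\<bar>"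
        using h by (simp add: field_simps)
      also have "\<dots> \<le> C * h\<^sup>2 / \<bar>h\<bar>"
        using remainder[OF h(2)] by (intro divide_right_mono) auto
      also have "\<dots> = C * \<bar>h\<bar>"
        using h by (cases "h \<ge> 0") (simp_all add: power2_eq_square)
      finally show "norm ((f (t + h) - f t) / h - D) \<le> C * \<bar>h\<bar>" .
    qed (use \<open>0 < r\<close> in auto)
    show "((\<lambda>h. C * \<bar>h\<bar>) \<longlongrightarrow> 0) (at 0)"
      using tendsto_mult_left[of "\<lambda>h. \<bar>h\<bar>" 0 "at 0" C] by (simp add: tendsto_rabs_zero)
  qed
  then show ?thesis
    by (simp add: DERIV_def LIM_zero_cancel)
qed

locale exp_integrable_near_zero =
  fixes M :: "'a measure" and U :: "'a \<Rightarrow> real" and e :: real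
  assumes U_measurable [measurable]: "U \<in> borel_measurable M"
    and e_pos: "0 < e"
    and integrable_exp: "\<And>t. \<bar>t\<bar> < e \<Longrightarrow> integrable M (\<lambda>\<omega>. exp (t * U \<omega>))"
begin

lemma integrable_exp_abs:
  assumes "0 \<le> b" "b < e"
  shows "integrable M (\<lambda>\<omega>. exp (b * \<bar>U \<omega>\<bar>))"
proof (rule Bochner_Integration.integrable_bound)
  show "integrable M (\<lambda>\<omega>. exp (b * U \<omega>) + exp ((- b) * U \<omega>))"
    using assms by (intro Bochner_Integration.integrable_add integrable_exp) auto
  show "AE \<omega> in M. norm (exp (b * \<bar>U \<omega>\<bar>)) \<le> norm (exp (b * U \<omega>) + exp ((- b) * U \<omega>))"
  proof (intro AE_I2)
    fix \<omega>
    have "exp (b * \<bar>U \<omega>\<bar>) = exp (b * U \<omega>) \<or> exp (b * \<bar>U \<omega>\<bar>) = exp ((- b) * U \<omega>)"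
      by (cases "0 \<le> U \<omega>") simp_all
    then have "exp (b * \<bar>U \<omega>\<bar>) \<le> exp (b * U \<omega>) + exp ((- b) * U \<omega>)"
      using exp_gt_zero[of "b * U \<omega>"] exp_gt_zero[of "(- b) * U \<omega>"] by (elim disjE) linarith+
    then show "norm (exp (b * \<bar>U \<omega>\<bar>)) \<le> norm (exp (b * U \<omega>) + exp ((- b) * U \<omega>))"
      by simp
  qed
qed simp

lemma integrable_abs_power_exp_exp:
  assumes "\<bar>s\<bar> + r < e" "0 \<le> r"
  shows "integrable M (\<lambda>\<omega>. \<bar>U \<omega>\<bar> ^ m * exp (s * U \<omega>) * exp (r * \<bar>U \<omega>\<bar>))"
proof -
  define d where "d = (e - \<bar>s\<bar> - r) / 2"
  define b where "b = \<bar>s\<bar> + r + d"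
  have d: "0 < d" and b: "0 \<le> b" "b < e"
    using assms by (auto simp: d_def b_def field_simps)
  show ?thesis
  proof (rule Bochner_Integration.integrable_bound)
    show "integrable M (\<lambda>\<omega>. fact m / d ^ m * exp (b * \<bar>U \<omega>\<bar>))"
      using integrable_exp_abs[OF b] by simp
    show "AE \<omega> in M. norm (\<bar>U \<omega>\<bar> ^ m * exp (s * U \<omega>) * exp (r * \<bar>U \<omega>\<bar>))
        \<le> norm (fact m / d ^ m * exp (b * \<bar>U \<omega>\<bar>))"
    proof (intro AE_I2)
      fix \<omega>
      have "exp (s * U \<omega>) \<le> exp (\<bar>s\<bar> * \<bar>U \<omega>\<bar>)"
        by (simp add: abs_mult[symmetric] abs_ge_self)
      then have "\<bar>U \<omega>\<bar> ^ m * exp (s * U \<omega>) * exp (r * \<bar>U \<omega>\<bar>)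
          \<le> (fact m / d ^ m * exp (d * \<bar>U \<omega>\<bar>)) * exp (\<bar>s\<bar> * \<bar>U \<omega>\<bar>) * exp (r * \<bar>U \<omega>\<bar>)"
        using d by (intro mult_right_mono mult_mono abs_power_le_exp_abs) auto
      also have "\<dots> = fact m / d ^ m * exp (b * \<bar>U \<omega>\<bar>)"
        by (simp add: b_def distrib_right mult_exp_exp)
      finally show "norm (\<bar>U \<omega>\<bar> ^ m * exp (s * U \<omega>) * exp (r * \<bar>U \<omega>\<bar>))
          \<le> norm (fact m / d ^ m * exp (b * \<bar>U \<omega>\<bar>))"
        using d by simp
    qed
  qed simp
qed

lemma integrable_power_exp:
  assumes "\<bar>s\<bar> < e"
  shows "integrable M (\<lambda>\<omega>. U \<omega> ^ m * exp (s * U \<omega>))"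
proof (rule Bochner_Integration.integrable_bound)
  show "integrable M (\<lambda>\<omega>. \<bar>U \<omega>\<bar> ^ m * exp (s * U \<omega>) * exp (0 * \<bar>U \<omega>\<bar>))"
    using assms by (intro integrable_abs_power_exp_exp) auto
qed (auto simp: abs_mult power_abs)

lemma integrable_power: "integrable M (\<lambda>\<omega>. U \<omega> ^ m)"
  using integrable_power_exp[of 0 m] e_pos by simp

text \<open>By \<open>funpow_deriv_tilted_moment\<close> below, this is the \<open>n\<close>-th derivative of the moment
  generating function at \<open>t\<close>.\<close>

definition tilted_moment :: "nat \<Rightarrow> real \<Rightarrow> real" where
  "tilted_moment n t = (\<integral>\<omega>. U \<omega> ^ n * exp (t * U \<omega>) \<partial>M)"

lemma tilted_moment_remainder_le:
  assumes "\<bar>t\<bar> + r < e" "\<bar>h\<bar> < r"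
  shows "\<bar>tilted_moment n (t + h) - tilted_moment n t - h * tilted_moment (Suc n) t\<bar>
    \<le> (\<integral>\<omega>. \<bar>U \<omega>\<bar> ^ (n + 2) * exp (t * U \<omega>) * exp (r * \<bar>U \<omega>\<bar>) \<partial>M) * h\<^sup>2"
proof -
  let ?F = "\<lambda>\<omega>. U \<omega> ^ n * exp ((t + h) * U \<omega>) - U \<omega> ^ n * exp (t * U \<omega>)
    - h * (U \<omega> ^ Suc n * exp (t * U \<omega>))"
  have "\<bar>t + h\<bar> < e" "\<bar>t\<bar> < e"
    using assms abs_triangle_ineq[of t h] by linarith+
  then have int_th: "integrable M (\<lambda>\<omega>. U \<omega> ^ n * exp ((t + h) * U \<omega>))"
    and int_t: "integrable M (\<lambda>\<omega>. U \<omega> ^ n * exp (t * U \<omega>))"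
    and int_Suc: "integrable M (\<lambda>\<omega>. U \<omega> ^ Suc n * exp (t * U \<omega>))"
    by (simp_all add: integrable_power_exp del: power_Suc)
  have int_bound: "integrable M (\<lambda>\<omega>. \<bar>U \<omega>\<bar> ^ (n + 2) * exp (t * U \<omega>) * exp (r * \<bar>U \<omega>\<bar>))"
    using assms by (intro integrable_abs_power_exp_exp) auto
  have "tilted_moment n (t + h) - tilted_moment n t - h * tilted_moment (Suc n) t = integral\<^sup>L M ?F"
    unfolding tilted_moment_def using int_th int_t int_Suc by simp
  then have "\<bar>tilted_moment n (t + h) - tilted_moment n t - h * tilted_moment (Suc n) t\<bar>
      \<le> (\<integral>\<omega>. \<bar>?F \<omega>\<bar> \<partial>M)"
    using integral_abs_bound[of M ?F] by simp
  also have "\<dots> \<le> (\<integral>\<omega>. (\<bar>U \<omega>\<bar> ^ (n + 2) * exp (t * U \<omega>) * exp (r * \<bar>U \<omega>\<bar>)) * h\<^sup>2 \<partial>M)"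
    using assms int_th int_t int_Suc int_bound
    by (intro integral_mono abs_power_exp_remainder_le) auto
  finally show ?thesis
    by simp
qed

lemma has_real_derivative_tilted_moment:
  assumes "\<bar>t\<bar> < e"
  shows "(tilted_moment n has_real_derivative tilted_moment (Suc n) t) (at t)"
proof -
  define r where "r = (e - \<bar>t\<bar>) / 2"
  have r: "0 < r" "\<bar>t\<bar> + r < e"
    using assms by (auto simp: r_def field_simps)
  show ?thesis
    using r(1) tilted_moment_remainder_le[OF r(2)] by (rule has_real_derivative_quadratic_remainder)
qed

lemma funpow_deriv_tilted_moment:
  "\<bar>t\<bar> < e \<Longrightarrow> (deriv ^^ k) (tilted_moment 0) t = tilted_moment k t"
proof (induction k arbitrary: t)
  case 0
  then show ?case by simp
next
  case (Suc k)
  have "((deriv ^^ k) (tilted_moment 0) has_real_derivative tilted_moment (Suc k) t) (at t)"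
  proof (rule has_field_derivative_transform_within_open)
    show "(tilted_moment k has_real_derivative tilted_moment (Suc k) t) (at t)"
      using Suc.prems by (rule has_real_derivative_tilted_moment)
    show "open {-e<..<e}" "t \<in> {-e<..<e}"
      using Suc.prems by auto
    show "tilted_moment k s = (deriv ^^ k) (tilted_moment 0) s" if "s \<in> {-e<..<e}" for s
      using Suc.IH[of s] that by auto
  qed
  then show ?case
    by (simp add: DERIV_imp_deriv)
qed

lemma funpow_deriv_mgf_0:
  "(deriv ^^ k) (\<lambda>t. \<integral>\<omega>. exp (t * U \<omega>) \<partial>M) 0 = (\<integral>\<omega>. U \<omega> ^ k \<partial>M)"
proof -
  have "(\<lambda>t. \<integral>\<omega>. exp (t * U \<omega>) \<partial>M) = tilted_moment 0"
    by (simp add: tilted_moment_def fun_eq_iff)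
  then show ?thesis
    using funpow_deriv_tilted_moment[of 0 k] e_pos by (simp add: tilted_moment_def)
qed

end

section \<open>Linear forms of a centred Gaussian vector\<close>

lemma sum_indicator_singleton_mult:
  fixes f :: "nat \<Rightarrow> real"
  assumes "i < p"
  shows "(\<Sum>n<p. indicator {i} n * f n) = f i"
proof -
  have "(\<Sum>n<p. indicator {i} n * f n) = (\<Sum>n<p. if n = i then f n else 0)"
    by (intro sum.cong) (auto simp: indicator_def)
  also have "\<dots> = f i"
    using assms by (simp add: sum.delta)
  finally show ?thesis .
qed

lemma sum_mult_indicator_singleton:
  fixes f :: "nat \<Rightarrow> real"
  assumes "i < p"
  shows "(\<Sum>n<p. f n * indicator {i} n) = f i"
  using sum_indicator_singleton_mult[OF assms, of f] by (simp add: mult.commute)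

locale centred_gaussian_vector = prob_space M
  for M :: "'a measure" +
  fixes p :: nat and Z :: "nat \<Rightarrow> 'a \<Rightarrow> real" and S :: "real mat"
  assumes gaussian: "centred_mvnormal M p Z S"
begin

lemma Z_measurable [measurable]: "i < p \<Longrightarrow> Z i \<in> borel_measurable M"
  using gaussian unfolding centred_mvnormal_def by auto

definition linear_form :: "(nat \<Rightarrow> real) \<Rightarrow> 'a \<Rightarrow> real" where
  "linear_form a \<omega> = (\<Sum>i<p. a i * Z i \<omega>)"

definition quad_form :: "(nat \<Rightarrow> real) \<Rightarrow> real" where
  "quad_form a = (\<Sum>i<p. \<Sum>j<p. a i * S $$ (i, j) * a j)"

lemma linear_form_measurable [measurable]: "linear_form a \<in> borel_measurable M"
  unfolding linear_form_def by measurable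

lemma char_linear_form:
  "char (distr M borel (linear_form a)) t = complex_of_real (exp (- (t\<^sup>2 * quad_form a) / 2))"
proof -
  have "char (distr M borel (linear_form a)) t = (CLINT \<omega>|M. cis (\<Sum>i<p. (t * a i) * Z i \<omega>))"
    unfolding char_def
    by (subst integral_distr)
       (auto simp: cis_conv_exp linear_form_def sum_distrib_left mult.assoc intro!: Bochner_Integration.integral_cong)
  also have "\<dots> = complex_of_real (exp (- (\<Sum>i<p. \<Sum>j<p. (t * a i) * S $$ (i, j) * (t * a j)) / 2))"
    using gaussian unfolding centred_mvnormal_def by (elim conjE allE) assumption
  also have "(\<Sum>i<p. \<Sum>j<p. (t * a i) * S $$ (i, j) * (t * a j)) = t\<^sup>2 * quad_form a"
    unfolding quad_form_def by (simp add: sum_distrib_left power2_eq_square mult_ac)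
  finally show ?thesis .
qed

lemma quad_form_nonneg: "0 \<le> quad_form a"
proof -
  interpret D: real_distribution "distr M borel (linear_form a)"
    by simp
  have "norm (char (distr M borel (linear_form a)) 1) \<le> 1"
    by (rule D.cmod_char_le_1)
  then show ?thesis
    by (simp add: char_linear_form)
qed

text \<open>Comparing with a scaled standard normal variable, rather than with \<open>normal_density\<close>, also
  covers the degenerate case \<open>quad_form a = 0\<close>.\<close>

lemma distr_linear_form:
  "distr M borel (linear_form a) = distr std_normal_distribution borel (\<lambda>x. sqrt (quad_form a) * x)"
proof (rule Levy_uniqueness)
  interpret N: real_distribution std_normal_distribution
    by (rule real_dist_normal_dist)
  show "real_distribution (distr M borel (linear_form a))"
    by simp
  show "real_distribution (distr std_normal_distribution borel (\<lambda>x. sqrt (quad_form a) * x))"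
    by (intro N.real_distribution_distr) simp
  show "char (distr M borel (linear_form a))
      = char (distr std_normal_distribution borel (\<lambda>x. sqrt (quad_form a) * x))"
  proof
    fix t
    have "char (distr std_normal_distribution borel (\<lambda>x. sqrt (quad_form a) * x)) t
        = char std_normal_distribution (t * sqrt (quad_form a))"
      unfolding char_def by (subst integral_distr) (auto simp: mult_ac)
    also have "\<dots> = char (distr M borel (linear_form a)) t"
      using quad_form_nonneg[of a]
      by (simp add: char_std_normal_distribution char_linear_form power_mult_distrib)
    finally show "char (distr M borel (linear_form a)) t
        = char (distr std_normal_distribution borel (\<lambda>x. sqrt (quad_form a) * x)) t" ..
  qed
qed

lemma integrable_linear_form_power: "integrable M (\<lambda>\<omega>. linear_form a \<omega> ^ n)"
proof -
  have "integrable std_normal_distribution (\<lambda>x. (sqrt (quad_form a) * x) ^ n)"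
    unfolding power_mult_distrib
    by (intro integrable_mult_right integrable_std_normal_distribution_moment)
  then have "integrable (distr M borel (linear_form a)) (\<lambda>x. x ^ n)"
    unfolding distr_linear_form by (subst integrable_distr_eq) auto
  then show ?thesis
    by (subst (asm) integrable_distr_eq) auto
qed

lemma integral_linear_form_power:
  "(\<integral>\<omega>. linear_form a \<omega> ^ n \<partial>M)
    = sqrt (quad_form a) ^ n * (\<integral>x. x ^ n \<partial>std_normal_distribution)"
proof -
  have "(\<integral>\<omega>. linear_form a \<omega> ^ n \<partial>M) = (\<integral>x. x ^ n \<partial>distr M borel (linear_form a))"
    by (subst integral_distr) auto
  also have "\<dots> = (\<integral>x. (sqrt (quad_form a) * x) ^ n \<partial>std_normal_distribution)"
    unfolding distr_linear_form by (subst integral_distr) auto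
  finally show ?thesis
    by (simp add: power_mult_distrib)
qed

lemma integral_linear_form_odd_power: "odd n \<Longrightarrow> (\<integral>\<omega>. linear_form a \<omega> ^ n \<partial>M) = 0"
  by (simp add: integral_linear_form_power integral_std_normal_distribution_moment_odd)

lemma integral_linear_form_power2: "(\<integral>\<omega>. linear_form a \<omega> ^ 2 \<partial>M) = quad_form a"
  using integral_linear_form_power[of a 2] std_normal_distribution_even_moments(1)[of 1]
    quad_form_nonneg[of a]
  by simp

lemma integral_linear_form_power4: "(\<integral>\<omega>. linear_form a \<omega> ^ 4 \<partial>M) = 3 * (quad_form a)\<^sup>2"
proof -
  have "sqrt (quad_form a) ^ 4 = (quad_form a)\<^sup>2"
    using quad_form_nonneg[of a]
    by (metis power2_eq_square power_mult real_sqrt_pow2 numeral_Bit0 mult_2)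
  moreover have "(\<integral>x. x ^ 4 \<partial>std_normal_distribution) = 3"
    using std_normal_distribution_even_moments(1)[of 2] by (simp add: fact_numeral)
  ultimately show ?thesis
    by (simp add: integral_linear_form_power)
qed

definition bilin_form :: "(nat \<Rightarrow> real) \<Rightarrow> (nat \<Rightarrow> real) \<Rightarrow> real" where
  "bilin_form a b = (\<Sum>i<p. \<Sum>j<p. a i * S $$ (i, j) * b j)"

lemma quad_form_eq_bilin_form: "quad_form a = bilin_form a a"
  by (simp add: quad_form_def bilin_form_def)

lemma bilin_form_add_left: "bilin_form (\<lambda>n. a n + b n) c = bilin_form a c + bilin_form b c"
  by (simp add: bilin_form_def distrib_right sum.distrib)

lemma bilin_form_add_right: "bilin_form a (\<lambda>n. b n + c n) = bilin_form a b + bilin_form a c"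
  by (simp add: bilin_form_def distrib_left sum.distrib)

lemma bilin_form_scale_left: "bilin_form (\<lambda>n. x * a n) b = x * bilin_form a b"
  by (simp add: bilin_form_def sum_distrib_left mult_ac)

lemma bilin_form_scale_right: "bilin_form a (\<lambda>n. x * b n) = x * bilin_form a b"
  by (simp add: bilin_form_def sum_distrib_left mult_ac)

lemma bilin_form_indicator:
  assumes "i < p" "j < p"
  shows "bilin_form (indicator {i}) (indicator {j}) = S $$ (i, j)"
  unfolding bilin_form_def
  using assms by (simp only: sum_mult_indicator_singleton sum_indicator_singleton_mult)

lemmas bilin_form_simps = quad_form_eq_bilin_form bilin_form_add_left bilin_form_add_right
  bilin_form_scale_left bilin_form_scale_right bilin_form_indicator

lemma linear_form_add: "linear_form (\<lambda>n. a n + b n) \<omega> = linear_form a \<omega> + linear_form b \<omega>"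
  by (simp add: linear_form_def distrib_right sum.distrib)

lemma linear_form_scale: "linear_form (\<lambda>n. x * a n) \<omega> = x * linear_form a \<omega>"
  by (simp add: linear_form_def sum_distrib_left mult_ac)

lemma linear_form_indicator: "i < p \<Longrightarrow> linear_form (indicator {i}) \<omega> = Z i \<omega>"
  unfolding linear_form_def by (rule sum_indicator_singleton_mult)

lemmas linear_form_simps = linear_form_add linear_form_scale linear_form_indicator

end

section \<open>Polarization\<close>

text \<open>Alternating sums over the vertices of \<open>{0,1}\<^sup>n\<close>: applied to \<open>(e \<bullet> x)\<^sup>n\<close> they
  extract \<open>n! x\<^sub>1 \<cdots> x\<^sub>n\<close>, which turns moments of linear combinations into mixed moments.\<close>

definition polar_sum2 :: "(real \<Rightarrow> real \<Rightarrow> real) \<Rightarrow> real" where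
  "polar_sum2 F = F 1 1 - F 0 1 - F 1 0 + F 0 0"

definition polar_sum3 :: "(real \<Rightarrow> real \<Rightarrow> real \<Rightarrow> real) \<Rightarrow> real" where
  "polar_sum3 F = F 1 1 1 - F 0 1 1 - F 1 0 1 - F 1 1 0 + F 1 0 0 + F 0 1 0 + F 0 0 1 - F 0 0 0"

definition polar_sum4 :: "(real \<Rightarrow> real \<Rightarrow> real \<Rightarrow> real \<Rightarrow> real) \<Rightarrow> real" where
  "polar_sum4 F = F 1 1 1 1 - F 0 1 1 1 - F 1 0 1 1 - F 1 1 0 1 - F 1 1 1 0
     + F 0 0 1 1 + F 0 1 0 1 + F 0 1 1 0 + F 1 0 0 1 + F 1 0 1 0 + F 1 1 0 0
     - F 1 0 0 0 - F 0 1 0 0 - F 0 0 1 0 - F 0 0 0 1 + F 0 0 0 0"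

lemma polar_sum2_power: "polar_sum2 (\<lambda>e1 e2. (e1 * x1 + e2 * x2) ^ 2) = 2 * x1 * x2"
  unfolding polar_sum2_def by (simp add: eval_nat_numeral algebra_simps)

lemma polar_sum3_power:
  "polar_sum3 (\<lambda>e1 e2 e3. (e1 * x1 + e2 * x2 + e3 * x3) ^ 3) = 6 * x1 * x2 * x3"
  unfolding polar_sum3_def by (simp add: eval_nat_numeral algebra_simps)

lemma polar_sum4_power:
  "polar_sum4 (\<lambda>e1 e2 e3 e4. (e1 * x1 + e2 * x2 + e3 * x3 + e4 * x4) ^ 4) = 24 * x1 * x2 * x3 * x4"
  unfolding polar_sum4_def by (simp add: eval_nat_numeral algebra_simps)

lemma integral_polar_sum2:
  assumes "\<And>e1 e2. integrable M (G e1 e2)"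
  shows "(\<integral>\<omega>. polar_sum2 (\<lambda>e1 e2. G e1 e2 \<omega>) \<partial>M) = polar_sum2 (\<lambda>e1 e2. integral\<^sup>L M (G e1 e2))"
  unfolding polar_sum2_def using assms by simp

lemma integral_polar_sum3:
  assumes "\<And>e1 e2 e3. integrable M (G e1 e2 e3)"
  shows "(\<integral>\<omega>. polar_sum3 (\<lambda>e1 e2 e3. G e1 e2 e3 \<omega>) \<partial>M)
    = polar_sum3 (\<lambda>e1 e2 e3. integral\<^sup>L M (G e1 e2 e3))"
  unfolding polar_sum3_def using assms by simp

lemma integral_polar_sum4:
  assumes "\<And>e1 e2 e3 e4. integrable M (G e1 e2 e3 e4)"
  shows "(\<integral>\<omega>. polar_sum4 (\<lambda>e1 e2 e3 e4. G e1 e2 e3 e4 \<omega>) \<partial>M)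
    = polar_sum4 (\<lambda>e1 e2 e3 e4. integral\<^sup>L M (G e1 e2 e3 e4))"
  unfolding polar_sum4_def using assms by simp

text \<open>In the following identities the argument of the polar sum is \<open>E[(c U + Y)\<^sup>n]\<close> for a
  centred Gaussian \<open>Y\<close> independent of \<open>U\<close>, with \<open>c = e \<bullet> d\<close> and \<open>Var Y\<close> the quadratic form
  in \<open>e\<close> with coefficients \<open>s\<close>.\<close>

lemma polar_sum2_mixture_moment:
  fixes d1 d2 s11 s12 s22 m2 :: real
  shows "polar_sum2 (\<lambda>e1 e2. m2 * (e1 * d1 + e2 * d2) ^ 2
      + (e1 * e1 * s11 + e2 * e2 * s22 + 2 * e1 * e2 * s12))
    = 2 * (s12 + m2 * d1 * d2)"
  unfolding polar_sum2_def by (simp add: eval_nat_numeral algebra_simps)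

lemma polar_sum3_mixture_moment:
  fixes d1 d2 d3 s11 s12 s13 s22 s23 s33 m1 m3 :: real
  shows "polar_sum3 (\<lambda>e1 e2 e3. m3 * (e1 * d1 + e2 * d2 + e3 * d3) ^ 3
      + 3 * m1 * ((e1 * d1 + e2 * d2 + e3 * d3) * (e1 * e1 * s11 + e2 * e2 * s22 + e3 * e3 * s33
        + 2 * e1 * e2 * s12 + 2 * e1 * e3 * s13 + 2 * e2 * e3 * s23)))
    = 6 * (m1 * (d1 * s23 + d2 * s13 + d3 * s12) + m3 * d1 * d2 * d3)"
  unfolding polar_sum3_def by (simp add: eval_nat_numeral algebra_simps)

lemma polar_sum4_add:
  "polar_sum4 (\<lambda>e1 e2 e3 e4. F e1 e2 e3 e4 + G e1 e2 e3 e4) = polar_sum4 F + polar_sum4 G"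
  unfolding polar_sum4_def by simp

lemma polar_sum4_mult: "polar_sum4 (\<lambda>e1 e2 e3 e4. c * F e1 e2 e3 e4) = c * polar_sum4 F"
  unfolding polar_sum4_def by (simp add: algebra_simps)

context
  fixes s11 s12 s13 s14 s22 s23 s24 s33 s34 s44 :: real
    and Q :: "real \<Rightarrow> real \<Rightarrow> real \<Rightarrow> real \<Rightarrow> real"
  defines "Q \<equiv> \<lambda>e1 e2 e3 e4. e1 * e1 * s11 + e2 * e2 * s22 + e3 * e3 * s33 + e4 * e4 * s44
    + 2 * e1 * e2 * s12 + 2 * e1 * e3 * s13 + 2 * e1 * e4 * s14
    + 2 * e2 * e3 * s23 + 2 * e2 * e4 * s24 + 2 * e3 * e4 * s34"
begin

lemma polar_sum4_power2_mult_quadratic: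
  "polar_sum4 (\<lambda>e1 e2 e3 e4. (e1 * d1 + e2 * d2 + e3 * d3 + e4 * d4) ^ 2 * Q e1 e2 e3 e4)
    = 4 * (d1 * d2 * s34 + d1 * d3 * s24 + d1 * d4 * s23 + d2 * d3 * s14 + d2 * d4 * s13 + d3 * d4 * s12)"
  unfolding polar_sum4_def Q_def by (simp add: eval_nat_numeral algebra_simps)

lemma polar_sum4_quadratic_power2:
  "polar_sum4 (\<lambda>e1 e2 e3 e4. (Q e1 e2 e3 e4) ^ 2) = 8 * (s12 * s34 + s13 * s24 + s14 * s23)"
  unfolding polar_sum4_def Q_def by (simp add: eval_nat_numeral algebra_simps)

lemma polar_sum4_mixture_moment:
  "polar_sum4 (\<lambda>e1 e2 e3 e4. m4 * (e1 * d1 + e2 * d2 + e3 * d3 + e4 * d4) ^ 4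
      + 6 * m2 * ((e1 * d1 + e2 * d2 + e3 * d3 + e4 * d4) ^ 2 * Q e1 e2 e3 e4)
      + 3 * (Q e1 e2 e3 e4) ^ 2)
    = 24 * (s12 * s34 + s13 * s24 + s14 * s23
      + m2 * (d1 * d2 * s34 + d1 * d3 * s24 + d1 * d4 * s23 + d2 * d3 * s14 + d2 * d4 * s13 + d3 * d4 * s12)
      + m4 * d1 * d2 * d3 * d4)"
  by (simp only: polar_sum4_add polar_sum4_mult polar_sum4_power polar_sum4_power2_mult_quadratic
      polar_sum4_quadratic_power2) (simp add: algebra_simps)

end

section \<open>Normal mean mixtures\<close>

lemma vimage_sets_compose_subset:
  assumes "g \<in> measurable N K"
    and "\<And>\<omega>. \<omega> \<in> space M \<Longrightarrow> f \<omega> = g (h \<omega>)" "\<And>\<omega>. \<omega> \<in> space M \<Longrightarrow> h \<omega> \<in> space N"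
  shows "{f -` A \<inter> space M | A. A \<in> sets K} \<subseteq> {h -` B \<inter> space M | B. B \<in> sets N}"
proof safe
  fix A
  assume "A \<in> sets K"
  then have "g -` A \<inter> space N \<in> sets N"
    using assms(1) by (rule measurable_sets[rotated])
  moreover have "f -` A \<inter> space M = h -` (g -` A \<inter> space N) \<inter> space M"
    using assms(2,3) by auto
  ultimately show "\<exists>B. f -` A \<inter> space M = h -` B \<inter> space M \<and> B \<in> sets N"
    by blast
qed

locale normal_mean_mixture =
  exp_integrable_near_zero M U e + centred_gaussian_vector M p Z S
  for M :: "'a measure" and U e p Z S +
  fixes delta :: "real mat"
  assumes indep_U_Z: "indep_set {U -` A \<inter> space M | A. A \<in> sets borel}
      {(\<lambda>\<omega>. \<lambda>i\<in>{..<p}. Z i \<omega>) -` B \<inter> space M | B.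
         B \<in> sets (Pi\<^sub>M {..<p} (\<lambda>_. borel :: real measure))}"
    and delta_carrier: "delta \<in> carrier_mat p 1"
    and S_carrier: "S \<in> carrier_mat p p"
    and S_symmetric_mat: "transpose_mat S = S"
begin

lemma S_symmetric: "i < p \<Longrightarrow> j < p \<Longrightarrow> S $$ (j, i) = S $$ (i, j)"
  using S_carrier by (subst S_symmetric_mat[symmetric]) simp

definition coord :: "nat \<Rightarrow> 'a \<Rightarrow> real" where
  "coord i \<omega> = delta $$ (i, 0) * U \<omega> + Z i \<omega>"

abbreviation U_moment :: "nat \<Rightarrow> real" where
  "U_moment k \<equiv> \<integral>\<omega>. U \<omega> ^ k \<partial>M"

lemma indep_var_U_power_linear_form_power:
  "indep_var borel (\<lambda>\<omega>. U \<omega> ^ k) borel (\<lambda>\<omega>. linear_form a \<omega> ^ m)"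
proof -
  let ?V = "\<lambda>\<omega>. \<lambda>i\<in>{..<p}. Z i \<omega>"
  let ?X = "case_bool (\<lambda>\<omega>. U \<omega> ^ k) (\<lambda>\<omega>. linear_form a \<omega> ^ m)"
  have "{?X b -` A \<inter> space M | A. A \<in> sets (case_bool borel borel b)}
      \<subseteq> case_bool {U -` A \<inter> space M | A. A \<in> sets borel}
          {?V -` B \<inter> space M | B. B \<in> sets (Pi\<^sub>M {..<p} (\<lambda>_. borel))} b" for b
  proof (cases b)
    case True
    have "{(\<lambda>\<omega>. U \<omega> ^ k) -` A \<inter> space M | A. A \<in> sets borel}
        \<subseteq> {U -` A \<inter> space M | A. A \<in> sets borel}"
      by (rule vimage_sets_compose_subset[where g = "\<lambda>x. x ^ k"]) auto
    then show ?thesis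
      using True by simp
  next
    case False
    have "{(\<lambda>\<omega>. linear_form a \<omega> ^ m) -` A \<inter> space M | A. A \<in> sets borel}
        \<subseteq> {?V -` B \<inter> space M | B. B \<in> sets (Pi\<^sub>M {..<p} (\<lambda>_. borel))}"
      by (rule vimage_sets_compose_subset[where g = "\<lambda>v. (\<Sum>i<p. a i * v i) ^ m"])
         (auto simp: linear_form_def space_PiM)
    then show ?thesis
      using False by simp
  qed
  then have "indep_sets (\<lambda>b. {?X b -` A \<inter> space M | A. A \<in> sets (case_bool borel borel b)}) UNIV"
    by (rule indep_sets_mono_sets[OF indep_U_Z[unfolded indep_set_def]])
  then show ?thesis
    unfolding indep_var_def indep_vars_def2 by (auto split: bool.split)
qed

lemma integrable_U_power_mult_linear_form_power:
  "integrable M (\<lambda>\<omega>. U \<omega> ^ k * linear_form a \<omega> ^ m)"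
  using indep_var_integrable[OF indep_var_U_power_linear_form_power integrable_power
      integrable_linear_form_power]
  by simp

lemma integral_U_power_mult_linear_form_power:
  "(\<integral>\<omega>. U \<omega> ^ k * linear_form a \<omega> ^ m \<partial>M) = U_moment k * (\<integral>\<omega>. linear_form a \<omega> ^ m \<partial>M)"
  using indep_var_lebesgue_integral[OF indep_var_U_power_linear_form_power integrable_power
      integrable_linear_form_power]
  by simp

lemma binomial_U_linear_form:
  "(c * U \<omega> + linear_form a \<omega>) ^ n
    = (\<Sum>k\<le>n. of_nat (n choose k) * c ^ k * (U \<omega> ^ k * linear_form a \<omega> ^ (n - k)))"
  by (simp add: binomial_ring power_mult_distrib mult_ac)

lemma integrable_U_linear_form_power: "integrable M (\<lambda>\<omega>. (c * U \<omega> + linear_form a \<omega>) ^ n)"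
  unfolding binomial_U_linear_form
  by (intro Bochner_Integration.integrable_sum integrable_mult_right
      integrable_U_power_mult_linear_form_power)

lemma integral_U_linear_form_power:
  "(\<integral>\<omega>. (c * U \<omega> + linear_form a \<omega>) ^ n \<partial>M)
    = (\<Sum>k\<le>n. of_nat (n choose k) * c ^ k * (U_moment k * (\<integral>\<omega>. linear_form a \<omega> ^ (n - k) \<partial>M)))"
  unfolding binomial_U_linear_form
  by (simp add: integrable_U_power_mult_linear_form_power integral_U_power_mult_linear_form_power)

lemma integral_U_linear_form_power1:
  "(\<integral>\<omega>. (c * U \<omega> + linear_form a \<omega>) ^ 1 \<partial>M) = c * U_moment 1"
  using integral_U_linear_form_power[of c a 1] integral_linear_form_odd_power[of 1 a]
  by (simp add: prob_space)

lemma integral_U_linear_form_power2: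
  "(\<integral>\<omega>. (c * U \<omega> + linear_form a \<omega>) ^ 2 \<partial>M) = U_moment 2 * c\<^sup>2 + quad_form a"
proof -
  have "{..2::nat} = {0, 1, 2}"
    by auto
  then show ?thesis
    using integral_U_linear_form_power[of c a 2]
      integral_linear_form_odd_power[of 1 a] integral_linear_form_power2[of a]
    by (simp add: prob_space)
qed

lemma integral_U_linear_form_power3:
  "(\<integral>\<omega>. (c * U \<omega> + linear_form a \<omega>) ^ 3 \<partial>M)
    = U_moment 3 * c ^ 3 + 3 * U_moment 1 * (c * quad_form a)"
proof -
  have "{..3::nat} = {0, 1, 2, 3}" "(3::nat) choose 2 = 3" "(3::nat) choose 1 = 3"
    by (auto simp: eval_nat_numeral)
  then show ?thesis
    using integral_U_linear_form_power[of c a 3]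
      integral_linear_form_odd_power[of 1 a] integral_linear_form_power2[of a]
      integral_linear_form_odd_power[of 3 a]
    by (simp add: prob_space algebra_simps)
qed

lemma integral_U_linear_form_power4:
  "(\<integral>\<omega>. (c * U \<omega> + linear_form a \<omega>) ^ 4 \<partial>M)
    = U_moment 4 * c ^ 4 + 6 * U_moment 2 * (c\<^sup>2 * quad_form a) + 3 * (quad_form a)\<^sup>2"
proof -
  have "{..4::nat} = {0, 1, 2, 3, 4}" "(4::nat) choose 3 = 4" "(4::nat) choose 2 = 6" "(4::nat) choose 1 = 4"
    by (auto simp: eval_nat_numeral)
  then show ?thesis
    using integral_U_linear_form_power[of c a 4]
      integral_linear_form_odd_power[of 1 a] integral_linear_form_power2[of a]
      integral_linear_form_odd_power[of 3 a] integral_linear_form_power4[of a]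
    by (simp add: prob_space algebra_simps)
qed

lemma integral_coord:
  assumes "i < p"
  shows "(\<integral>\<omega>. coord i \<omega> \<partial>M) = U_moment 1 * delta $$ (i, 0)"
proof -
  have "coord i = (\<lambda>\<omega>. (delta $$ (i, 0) * U \<omega> + linear_form (indicator {i}) \<omega>) ^ 1)"
    using assms by (simp add: fun_eq_iff coord_def linear_form_indicator)
  then show ?thesis
    using integral_U_linear_form_power1[of "delta $$ (i, 0)" "indicator {i}"] by (simp add: mult.commute)
qed

lemma integral_coord_mult_coord:
  assumes "i < p" "j < p"
  shows "(\<integral>\<omega>. coord i \<omega> * coord j \<omega> \<partial>M) = S $$ (i, j) + U_moment 2 * delta $$ (i, 0) * delta $$ (j, 0)"
proof -
  define G where "G e1 e2 \<omega> = (e1 * coord i \<omega> + e2 * coord j \<omega>) ^ 2" for e1 e2 \<omega>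
  have G: "G e1 e2 = (\<lambda>\<omega>. ((e1 * delta $$ (i, 0) + e2 * delta $$ (j, 0)) * U \<omega>
      + linear_form (\<lambda>n. e1 * indicator {i} n + e2 * indicator {j} n) \<omega>) ^ 2)" for e1 e2
    using assms by (simp add: fun_eq_iff G_def coord_def linear_form_simps algebra_simps)
  have "quad_form (\<lambda>n. e1 * indicator {i} n + e2 * indicator {j} n)
      = e1 * e1 * S $$ (i, i) + e2 * e2 * S $$ (j, j) + 2 * e1 * e2 * S $$ (i, j)" for e1 e2
    using assms S_symmetric[of i j] by (simp add: bilin_form_simps algebra_simps)
  then have "integral\<^sup>L M (G e1 e2) = U_moment 2 * (e1 * delta $$ (i, 0) + e2 * delta $$ (j, 0))\<^sup>2
      + (e1 * e1 * S $$ (i, i) + e2 * e2 * S $$ (j, j) + 2 * e1 * e2 * S $$ (i, j))" for e1 e2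
    by (simp only: G integral_U_linear_form_power2)
  moreover have "(\<lambda>\<omega>. coord i \<omega> * coord j \<omega>) = (\<lambda>\<omega>. polar_sum2 (\<lambda>e1 e2. G e1 e2 \<omega>) / 2)"
    by (simp add: G_def polar_sum2_power)
  ultimately show ?thesis
    by (simp add: integral_polar_sum2 G integrable_U_linear_form_power polar_sum2_mixture_moment)
qed

lemma integral_coord_mult3:
  assumes "i < p" "j < p" "k < p"
  shows "(\<integral>\<omega>. coord i \<omega> * coord j \<omega> * coord k \<omega> \<partial>M)
    = U_moment 1 * (delta $$ (i, 0) * S $$ (j, k) + delta $$ (j, 0) * S $$ (i, k) + delta $$ (k, 0) * S $$ (i, j))
      + U_moment 3 * delta $$ (i, 0) * delta $$ (j, 0) * delta $$ (k, 0)"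
proof -
  define G where "G e1 e2 e3 \<omega> = (e1 * coord i \<omega> + e2 * coord j \<omega> + e3 * coord k \<omega>) ^ 3" for e1 e2 e3 \<omega>
  have G: "G e1 e2 e3 = (\<lambda>\<omega>. ((e1 * delta $$ (i, 0) + e2 * delta $$ (j, 0) + e3 * delta $$ (k, 0)) * U \<omega>
      + linear_form (\<lambda>n. e1 * indicator {i} n + e2 * indicator {j} n + e3 * indicator {k} n) \<omega>) ^ 3)"
    for e1 e2 e3
    using assms by (simp add: fun_eq_iff G_def coord_def linear_form_simps algebra_simps)
  have "quad_form (\<lambda>n. e1 * indicator {i} n + e2 * indicator {j} n + e3 * indicator {k} n)
      = e1 * e1 * S $$ (i, i) + e2 * e2 * S $$ (j, j) + e3 * e3 * S $$ (k, k)
        + 2 * e1 * e2 * S $$ (i, j) + 2 * e1 * e3 * S $$ (i, k) + 2 * e2 * e3 * S $$ (j, k)" for e1 e2 e3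
    using assms S_symmetric[of i j] S_symmetric[of i k] S_symmetric[of j k]
    by (simp add: bilin_form_simps algebra_simps)
  then have "integral\<^sup>L M (G e1 e2 e3)
      = U_moment 3 * (e1 * delta $$ (i, 0) + e2 * delta $$ (j, 0) + e3 * delta $$ (k, 0)) ^ 3
        + 3 * U_moment 1 * ((e1 * delta $$ (i, 0) + e2 * delta $$ (j, 0) + e3 * delta $$ (k, 0))
          * (e1 * e1 * S $$ (i, i) + e2 * e2 * S $$ (j, j) + e3 * e3 * S $$ (k, k)
            + 2 * e1 * e2 * S $$ (i, j) + 2 * e1 * e3 * S $$ (i, k) + 2 * e2 * e3 * S $$ (j, k)))"
    for e1 e2 e3
    by (simp only: G integral_U_linear_form_power3)
  moreover have "(\<lambda>\<omega>. coord i \<omega> * coord j \<omega> * coord k \<omega>) = (\<lambda>\<omega>. polar_sum3 (\<lambda>e1 e2 e3. G e1 e2 e3 \<omega>) / 6)"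
    by (simp add: G_def polar_sum3_power mult.assoc)
  ultimately show ?thesis
    by (simp add: integral_polar_sum3 G integrable_U_linear_form_power polar_sum3_mixture_moment)
qed

lemma integral_coord_mult4:
  assumes "i < p" "j < p" "k < p" "l < p"
  shows "(\<integral>\<omega>. coord i \<omega> * coord j \<omega> * coord k \<omega> * coord l \<omega> \<partial>M)
    = S $$ (i, j) * S $$ (k, l) + S $$ (i, k) * S $$ (j, l) + S $$ (i, l) * S $$ (j, k)
      + U_moment 2 * (delta $$ (i, 0) * delta $$ (j, 0) * S $$ (k, l)
        + delta $$ (i, 0) * delta $$ (k, 0) * S $$ (j, l) + delta $$ (i, 0) * delta $$ (l, 0) * S $$ (j, k)
        + delta $$ (j, 0) * delta $$ (k, 0) * S $$ (i, l) + delta $$ (j, 0) * delta $$ (l, 0) * S $$ (i, k)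
        + delta $$ (k, 0) * delta $$ (l, 0) * S $$ (i, j))
      + U_moment 4 * delta $$ (i, 0) * delta $$ (j, 0) * delta $$ (k, 0) * delta $$ (l, 0)"
proof -
  define G where "G e1 e2 e3 e4 \<omega> = (e1 * coord i \<omega> + e2 * coord j \<omega> + e3 * coord k \<omega> + e4 * coord l \<omega>) ^ 4"
    for e1 e2 e3 e4 \<omega>
  define c where "c e1 e2 e3 e4 =
    e1 * delta $$ (i, 0) + e2 * delta $$ (j, 0) + e3 * delta $$ (k, 0) + e4 * delta $$ (l, 0)" for e1 e2 e3 e4
  define Q where "Q e1 e2 e3 e4 = e1 * e1 * S $$ (i, i) + e2 * e2 * S $$ (j, j) + e3 * e3 * S $$ (k, k)
    + e4 * e4 * S $$ (l, l) + 2 * e1 * e2 * S $$ (i, j) + 2 * e1 * e3 * S $$ (i, k)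
    + 2 * e1 * e4 * S $$ (i, l) + 2 * e2 * e3 * S $$ (j, k) + 2 * e2 * e4 * S $$ (j, l)
    + 2 * e3 * e4 * S $$ (k, l)" for e1 e2 e3 e4
  have G: "G e1 e2 e3 e4 = (\<lambda>\<omega>. (c e1 e2 e3 e4 * U \<omega> + linear_form (\<lambda>n. e1 * indicator {i} n
      + e2 * indicator {j} n + e3 * indicator {k} n + e4 * indicator {l} n) \<omega>) ^ 4)" for e1 e2 e3 e4
    using assms by (simp add: fun_eq_iff G_def c_def coord_def linear_form_simps algebra_simps)
  have "quad_form (\<lambda>n. e1 * indicator {i} n + e2 * indicator {j} n + e3 * indicator {k} n
      + e4 * indicator {l} n) = Q e1 e2 e3 e4" for e1 e2 e3 e4
    using assms S_symmetric[of i j] S_symmetric[of i k] S_symmetric[of i l]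
      S_symmetric[of j k] S_symmetric[of j l] S_symmetric[of k l]
    by (simp add: Q_def bilin_form_simps algebra_simps)
  then have "integral\<^sup>L M (G e1 e2 e3 e4) = U_moment 4 * (c e1 e2 e3 e4) ^ 4
      + 6 * U_moment 2 * ((c e1 e2 e3 e4)\<^sup>2 * Q e1 e2 e3 e4) + 3 * (Q e1 e2 e3 e4)\<^sup>2" for e1 e2 e3 e4
    by (simp only: G integral_U_linear_form_power4)
  moreover have "(\<lambda>\<omega>. coord i \<omega> * coord j \<omega> * coord k \<omega> * coord l \<omega>)
      = (\<lambda>\<omega>. polar_sum4 (\<lambda>e1 e2 e3 e4. G e1 e2 e3 e4 \<omega>) / 24)"
    by (simp add: G_def polar_sum4_power mult.assoc)
  ultimately show ?thesis
    unfolding c_def Q_def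
    by (simp add: integral_polar_sum4 G integrable_U_linear_form_power polar_sum4_mixture_moment)
qed

end

section \<open>Kronecker products and commutation matrices\<close>

lemma dim_kron [simp]:
  "dim_row (kron A B) = dim_row A * dim_row B" "dim_col (kron A B) = dim_col A * dim_col B"
  unfolding kron_def by simp_all

lemma index_kron:
  "i < dim_row A * dim_row B \<Longrightarrow> j < dim_col A * dim_col B \<Longrightarrow>
    kron A B $$ (i, j) = A $$ (i div dim_row B, j div dim_col B) * B $$ (i mod dim_row B, j mod dim_col B)"
  unfolding kron_def by simp

lemma dim_vecm [simp]: "dim_row (vecm A) = dim_row A * dim_col A" "dim_col (vecm A) = 1"
  unfolding vecm_def by simp_all

lemma index_vecm:
  "i < dim_row A * dim_col A \<Longrightarrow> vecm A $$ (i, 0) = A $$ (i mod dim_row A, i div dim_row A)"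
  unfolding vecm_def by simp

lemma dim_commutation_mat [simp]:
  "dim_row (commutation_mat m n) = m * n" "dim_col (commutation_mat m n) = m * n"
  unfolding commutation_mat_def by simp_all

lemma dim_mat_expect [simp]: "dim_row (mat_expect M r c F) = r" "dim_col (mat_expect M r c F) = c"
  unfolding mat_expect_def by simp_all

lemma index_mat_expect:
  "i < r \<Longrightarrow> j < c \<Longrightarrow> mat_expect M r c F $$ (i, j) = (\<integral>\<omega>. F \<omega> $$ (i, j) \<partial>M)"
  unfolding mat_expect_def by simp

lemma index_mult_sum:
  "i < dim_row A \<Longrightarrow> j < dim_col B \<Longrightarrow> dim_row B = dim_col A \<Longrightarrow>
    (A * B) $$ (i, j) = (\<Sum>l<dim_col A. A $$ (i, l) * B $$ (l, j))"
  by (simp add: scalar_prod_def atLeast0LessThan)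

lemma index_mult_transpose_col:
  assumes "dim_col u = 1" "dim_col v = 1" "i < dim_row u" "j < dim_row v"
  shows "(u * transpose_mat v) $$ (i, j) = u $$ (i, 0) * v $$ (j, 0)"
  using assms by (subst index_mult_sum) auto

lemma div_mod_less_of_less_square:
  fixes r p :: nat
  assumes "r < p * p"
  shows "r div p < p" "r mod p < p"
  using assms by (auto simp: less_mult_imp_div_less) (cases "p = 0"; simp)

lemma div_add_mod_mult_less_square:
  fixes r p :: nat
  assumes "r < p * p"
  shows "r div p + r mod p * p < p * p"
proof -
  have "r mod p * p + p \<le> p * p"
    using div_mod_less_of_less_square(2)[OF assms]
    by (metis add.commute mult.commute mult_Suc_right Suc_leI mult_le_mono2)
  then show ?thesis
    using div_mod_less_of_less_square(1)[OF assms] by linarith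
qed

lemma index_commutation_mat_mult:
  assumes "dim_row A = p * p" "r < p * p" "s < dim_col A"
  shows "(commutation_mat p p * A) $$ (r, s) = A $$ (r div p + r mod p * p, s)"
proof -
  let ?r' = "r div p + r mod p * p"
  have r': "?r' < p * p"
    using assms(2) by (rule div_add_mod_mult_less_square)
  have "(commutation_mat p p * A) $$ (r, s) = (\<Sum>l<p * p. commutation_mat p p $$ (r, l) * A $$ (l, s))"
    using assms by (subst index_mult_sum) auto
  also have "\<dots> = (\<Sum>l<p * p. if l = ?r' then A $$ (l, s) else 0)"
    using assms(2) by (intro sum.cong) (auto simp: commutation_mat_def)
  also have "\<dots> = A $$ (?r', s)"
    using r' by simp
  finally show ?thesis .
qed

lemma index_kron_one_mat_mult:
  assumes "dim_row d = p" "dim_col d = 1" "dim_row A = p" "r < p * p" "s < dim_col A"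
  shows "(kron (1\<^sub>m p) d * A) $$ (r, s) = d $$ (r mod p, 0) * A $$ (r div p, s)"
proof -
  have r: "r div p < p" "r mod p < p"
    using div_mod_less_of_less_square[OF assms(4)] .
  have "(kron (1\<^sub>m p) d * A) $$ (r, s) = (\<Sum>l<p. kron (1\<^sub>m p) d $$ (r, l) * A $$ (l, s))"
    using assms by (subst index_mult_sum) auto
  also have "\<dots> = (\<Sum>l<p. if r div p = l then d $$ (r mod p, 0) * A $$ (l, s) else 0)"
    using assms r by (intro sum.cong) (auto simp: index_kron)
  also have "\<dots> = d $$ (r mod p, 0) * A $$ (r div p, s)"
    using r by (simp add: sum.delta)
  finally show ?thesis .
qed

lemma index_one_plus_commutation_mult_kron:
  assumes "dim_row A = p" "dim_col A = p" "r < p * p" "s < p * p"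
  shows "((1\<^sub>m (p * p) + commutation_mat p p) * kron A A) $$ (r, s)
    = A $$ (r div p, s div p) * A $$ (r mod p, s mod p) + A $$ (r mod p, s div p) * A $$ (r div p, s mod p)"
proof -
  have "0 < p"
    using assms(3) by (cases p) auto
  have "(1\<^sub>m (p * p) + commutation_mat p p) * kron A A = kron A A + commutation_mat p p * kron A A"
    using assms(1,2) by (subst add_mult_distrib_mat[where nr = "p * p" and n = "p * p" and nc = "p * p"])
      (auto intro: carrier_matI)
  then show ?thesis
    using assms \<open>0 < p\<close> div_mod_less_of_less_square[OF assms(3)] div_mod_less_of_less_square[OF assms(4)]
      div_add_mod_mult_less_square[OF assms(3)]
    by (simp add: index_commutation_mat_mult index_kron del: index_mult_mat(1))
qed

section \<open>Moment matrices\<close>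

context normal_mean_mixture
begin

definition mixture_vec :: "'a \<Rightarrow> real mat" where
  "mixture_vec \<omega> = mat p 1 (\<lambda>(i, _). coord i \<omega>)"

lemma dim_delta [simp]: "dim_row delta = p" "dim_col delta = 1"
  using delta_carrier by auto

lemma dim_S [simp]: "dim_row S = p" "dim_col S = p"
  using S_carrier by auto

lemma dim_mixture_vec [simp]: "dim_row (mixture_vec \<omega>) = p" "dim_col (mixture_vec \<omega>) = 1"
  by (simp_all add: mixture_vec_def)

lemma index_mixture_vec [simp]: "i < p \<Longrightarrow> mixture_vec \<omega> $$ (i, 0) = coord i \<omega>"
  by (simp add: mixture_vec_def)

lemma mat_expect_mixture_vec: "mat_expect M p 1 mixture_vec = U_moment 1 \<cdot>\<^sub>m delta"
proof (rule eq_matI)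
  fix i j
  assume "i < dim_row (U_moment 1 \<cdot>\<^sub>m delta)" "j < dim_col (U_moment 1 \<cdot>\<^sub>m delta)"
  then have "i < p" "j = 0"
    by auto
  then show "mat_expect M p 1 mixture_vec $$ (i, j) = (U_moment 1 \<cdot>\<^sub>m delta) $$ (i, j)"
    by (simp add: index_mat_expect integral_coord)
qed auto

lemma mat_expect_mixture_vec_outer:
  "mat_expect M p p (\<lambda>\<omega>. mixture_vec \<omega> * transpose_mat (mixture_vec \<omega>))
    = S + U_moment 2 \<cdot>\<^sub>m kron delta (transpose_mat delta)"
  (is "?L = ?R")
proof (rule eq_matI)
  fix i j
  assume "i < dim_row ?R" "j < dim_col ?R"
  then have "i < p" "j < p"
    by auto
  then show "?L $$ (i, j) = ?R $$ (i, j)"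
    by (simp add: index_mat_expect index_mult_transpose_col index_kron
        integral_coord_mult_coord mult.assoc del: index_mult_mat(1))
qed auto

lemma mat_expect_mixture_vec_third:
  "mat_expect M (p * p) p (\<lambda>\<omega>. kron (kron (mixture_vec \<omega>) (transpose_mat (mixture_vec \<omega>))) (mixture_vec \<omega>))
    = U_moment 1 \<cdot>\<^sub>m (kron delta S + vecm S * transpose_mat delta + kron (1\<^sub>m p) delta * S)
      + U_moment 3 \<cdot>\<^sub>m (kron (1\<^sub>m p) delta * kron delta (transpose_mat delta))"
  (is "?L = ?R")
proof (rule eq_matI)
  fix r j
  assume "r < dim_row ?R" "j < dim_col ?R"
  then have r: "r < p * p" and j: "j < p"
    by auto
  note rp = div_mod_less_of_less_square[OF r]
  have "?L $$ (r, j) = (\<integral>\<omega>. coord (r div p) \<omega> * coord j \<omega> * coord (r mod p) \<omega> \<partial>M)"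
    using r j rp by (simp add: index_mat_expect index_kron)
  also have "\<dots> = ?R $$ (r, j)"
    using r j rp S_symmetric[OF j rp(2)] S_symmetric[OF rp]
    by (simp add: integral_coord_mult3 index_kron index_vecm index_mult_transpose_col
        index_kron_one_mat_mult del: index_mult_mat(1))
  finally show "?L $$ (r, j) = ?R $$ (r, j)" .
qed auto

lemma mat_expect_mixture_vec_fourth:
  "mat_expect M (p * p) (p * p)
      (\<lambda>\<omega>. kron (mixture_vec \<omega> * transpose_mat (mixture_vec \<omega>)) (mixture_vec \<omega> * transpose_mat (mixture_vec \<omega>)))
    = (1\<^sub>m (p * p) + commutation_mat p p) * kron S S + vecm S * transpose_mat (vecm S)
      + U_moment 2 \<cdot>\<^sub>m
        (kron (kron delta (transpose_mat delta)) S + kron (kron delta S) (transpose_mat delta)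
         + kron (kron S delta) (transpose_mat delta) + kron (kron (transpose_mat delta) S) delta
         + kron (kron (transpose_mat delta) (vecm S)) (transpose_mat delta)
         + kron delta delta * transpose_mat (vecm S))
      + U_moment 4 \<cdot>\<^sub>m kron (delta * transpose_mat delta) (delta * transpose_mat delta)"
  (is "?L = ?R")
proof (rule eq_matI)
  fix r s
  assume "r < dim_row ?R" "s < dim_col ?R"
  then have r: "r < p * p" and s: "s < p * p"
    by auto
  note rp = div_mod_less_of_less_square[OF r] and sp = div_mod_less_of_less_square[OF s]
  have "?L $$ (r, s)
      = (\<integral>\<omega>. coord (r div p) \<omega> * coord (s div p) \<omega> * coord (r mod p) \<omega> * coord (s mod p) \<omega> \<partial>M)"
    using r s rp sp
    by (simp add: index_mat_expect index_kron index_mult_transpose_col mult.assoc del: index_mult_mat(1))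
  also have "\<dots> = ?R $$ (r, s)"
    using r s rp sp S_symmetric[OF sp(1) rp(2)] S_symmetric[OF rp] S_symmetric[OF sp]
    by (simp add: integral_coord_mult4 index_one_plus_commutation_mult_kron index_kron index_vecm
        index_mult_transpose_col del: index_mult_mat(1))
  finally show "?L $$ (r, s) = ?R $$ (r, s)" .
qed auto

end

theorem lemma2:
  fixes M :: "'a measure" and p :: nat and Omega delta :: "real mat"
    and U :: "'a \<Rightarrow> real" and Z :: "nat \<Rightarrow> 'a \<Rightarrow> real"
    and Sigma :: "real mat" and X :: "'a \<Rightarrow> real mat"
  assumes P: "prob_space M"
    and Omega: "correlation_mat p Omega"
    and delta: "delta \<in> carrier_mat p 1"
    and Sigma_def: "Sigma \<equiv> Omega - delta * transpose_mat delta"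
    and Sigma_pd: "pos_def_mat p Sigma"
    and U_rv: "U \<in> borel_measurable M"
    and Z_normal: "centred_mvnormal M p Z Sigma"
    and indep: "prob_space.indep_set M
                  {U -` A \<inter> space M | A. A \<in> sets borel}
                  {(\<lambda>\<omega>. \<lambda>i\<in>{..<p}. Z i \<omega>) -` B \<inter> space M | B.
                     B \<in> sets (Pi\<^sub>M {..<p} (\<lambda>_. borel :: real measure))}"
    and mgf: "\<exists>e>0. \<forall>t. \<bar>t\<bar> < e \<longrightarrow> integrable M (\<lambda>\<omega>. exp (t * U \<omega>))"
    and X_def: "X \<equiv> \<lambda>\<omega>. mat p 1 (\<lambda>(i,_). delta $$ (i,0) * U \<omega> + Z i \<omega>)"
  shows "(\<forall>k\<in>{1..4::nat}. (deriv ^^ k) (\<lambda>t. integral\<^sup>L M (\<lambda>\<omega>. exp (t * U \<omega>))) 0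
              = integral\<^sup>L M (\<lambda>\<omega>. U \<omega> ^ k))
    \<and> mat_expect M p 1 X = integral\<^sup>L M U \<cdot>\<^sub>m delta
    \<and> mat_expect M p p (\<lambda>\<omega>. X \<omega> * transpose_mat (X \<omega>))
        = Sigma + integral\<^sup>L M (\<lambda>\<omega>. U \<omega> ^ 2) \<cdot>\<^sub>m kron delta (transpose_mat delta)
    \<and> mat_expect M (p * p) p (\<lambda>\<omega>. kron (kron (X \<omega>) (transpose_mat (X \<omega>))) (X \<omega>))
        = integral\<^sup>L M U \<cdot>\<^sub>m (kron delta Sigma + vecm Sigma * transpose_mat delta
                                + kron (1\<^sub>m p) delta * Sigma)
          + integral\<^sup>L M (\<lambda>\<omega>. U \<omega> ^ 3) \<cdot>\<^sub>m
              (kron (1\<^sub>m p) delta * kron delta (transpose_mat delta))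
    \<and> mat_expect M (p * p) (p * p) (\<lambda>\<omega>. kron (X \<omega> * transpose_mat (X \<omega>)) (X \<omega> * transpose_mat (X \<omega>)))
        = (1\<^sub>m (p * p) + commutation_mat p p) * kron Sigma Sigma
          + vecm Sigma * transpose_mat (vecm Sigma)
          + integral\<^sup>L M (\<lambda>\<omega>. U \<omega> ^ 2) \<cdot>\<^sub>m
              (kron (kron delta (transpose_mat delta)) Sigma
               + kron (kron delta Sigma) (transpose_mat delta)
               + kron (kron Sigma delta) (transpose_mat delta)
               + kron (kron (transpose_mat delta) Sigma) delta
               + kron (kron (transpose_mat delta) (vecm Sigma)) (transpose_mat delta)
               + kron delta delta * transpose_mat (vecm Sigma))
          + integral\<^sup>L M (\<lambda>\<omega>. U \<omega> ^ 4) \<cdot>\<^sub>m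
              kron (delta * transpose_mat delta) (delta * transpose_mat delta)"
proof -
  obtain e where e: "0 < e" "\<And>t. \<bar>t\<bar> < e \<Longrightarrow> integrable M (\<lambda>\<omega>. exp (t * U \<omega>))"
    using mgf by blast
  have Sigma: "Sigma \<in> carrier_mat p p" "transpose_mat Sigma = Sigma"
    using Sigma_pd unfolding pos_def_mat_def by auto
  interpret normal_mean_mixture M U e p Z Sigma delta
    using P U_rv e Z_normal indep delta Sigma
    by (intro normal_mean_mixture.intro exp_integrable_near_zero.intro centred_gaussian_vector.intro
        centred_gaussian_vector_axioms.intro normal_mean_mixture_axioms.intro) assumption+
  have "X = mixture_vec"
    unfolding X_def mixture_vec_def coord_def by (simp add: fun_eq_iff)
  then show ?thesis
    using funpow_deriv_mgf_0 mat_expect_mixture_vec mat_expect_mixture_vec_outer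
      mat_expect_mixture_vec_third mat_expect_mixture_vec_fourth
    by simp
qed

end
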